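(* Any two equivalent reduced operation sequences have the same profile.
   Context: Operation sequences: $\sigma[a]$ ($a\ge1$) denotes pushing the top $a$ elements of the input stack, as a block with relative order unchanged, onto the top of a working stack; $\tau[b]$ ($b\ge1$) denotes moving the top $b$ elements of the working stack, as a block with relative order unchanged, onto the top of an output stack; $\sigma=\sigma[1]$, $\tau=\tau[1]$. A well-formed operation sequence is a word $\alpha=\alpha_1\cdots\alpha_m$ in these symbols such that in every prefix the total push size is at least the total pop size, with equality for the whole word; its size $n$ is the total push size. Acting on an input stack containing $1,\dots,n$ with $1$ on top, it produces the permutation read from the final output stack top to bottom. Two well-formed sequences are equivalent if they have the same size and produce the same permutation. $\alpha$ is reduced if every consecutive pair $\alpha_i\alpha_{i+1}$ with $\alpha_i$ a push and $\alpha_{i+1}$ a pop equals $\sigma[1]\tau[1]$. The profile of $\alpha$ is the polygonal path through $v_0=(0,0),v_1,\dots,v_m$ where $v_i=v_{i-1}+(a,a)$ if $\alpha_i=\sigma[a]$ and $v_i=v_{i-1}+(b,-b)$ if $\alpha_i=\tau[b]$. *)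

theory Defs
  imports "HOL-Analysis.Analysis"
begin

text \<open>Operations: Push a is sigma[a], Pop b is tau[b].\<close>
datatype op = Push nat | Pop nat

fun push_size :: "op \<Rightarrow> nat" where
  "push_size (Push a) = a" | "push_size (Pop b) = 0"

fun pop_size :: "op \<Rightarrow> nat" where
  "pop_size (Push a) = 0" | "pop_size (Pop b) = b"

fun is_push :: "op \<Rightarrow> bool" where
  "is_push (Push a) = True" | "is_push (Pop b) = False"

fun is_pop :: "op \<Rightarrow> bool" where
  "is_pop (Push a) = False" | "is_pop (Pop b) = True"

fun op_arg :: "op \<Rightarrow> nat" where
  "op_arg (Push a) = a" | "op_arg (Pop b) = b"

definition seq_size :: "op list \<Rightarrow> nat" where
  "seq_size \<alpha> = sum_list (map push_size \<alpha>)"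

definition well_formed :: "op list \<Rightarrow> bool" where
  "well_formed \<alpha> \<longleftrightarrow>
     (\<forall>x \<in> set \<alpha>. op_arg x \<ge> 1) \<and>
     (\<forall>k \<le> length \<alpha>. sum_list (map pop_size (take k \<alpha>)) \<le> sum_list (map push_size (take k \<alpha>))) \<and>
     sum_list (map pop_size \<alpha>) = sum_list (map push_size \<alpha>)"

text \<open>Stacks are lists with the head being the top. State = (input, working, output).\<close>
fun step :: "nat list \<times> nat list \<times> nat list \<Rightarrow> op \<Rightarrow> nat list \<times> nat list \<times> nat list" where
  "step (inp, w, out) (Push a) = (drop a inp, take a inp @ w, out)"
| "step (inp, w, out) (Pop b) = (inp, drop b w, take b w @ out)"

text \<open>Permutation produced on input 1..n (1 on top), read from the output stack top to bottom.\<close>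
definition produced :: "op list \<Rightarrow> nat list" where
  "produced \<alpha> = snd (snd (foldl step ([1..<seq_size \<alpha> + 1], [], []) \<alpha>))"

definition equivalent :: "op list \<Rightarrow> op list \<Rightarrow> bool" where
  "equivalent \<alpha> \<beta> \<longleftrightarrow> seq_size \<alpha> = seq_size \<beta> \<and> produced \<alpha> = produced \<beta>"

definition reduced :: "op list \<Rightarrow> bool" where
  "reduced \<alpha> \<longleftrightarrow> (\<forall>i. Suc i < length \<alpha> \<longrightarrow> is_push (\<alpha> ! i) \<longrightarrow> is_pop (\<alpha> ! Suc i) \<longrightarrow>
      \<alpha> ! i = Push 1 \<and> \<alpha> ! Suc i = Pop 1)"

fun op_vec :: "op \<Rightarrow> real \<times> real" where
  "op_vec (Push a) = (real a, real a)"
| "op_vec (Pop b) = (real b, - real b)"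

definition vertex :: "op list \<Rightarrow> nat \<Rightarrow> real \<times> real" where
  "vertex \<alpha> i = sum_list (map op_vec (take i \<alpha>))"

definition profile :: "op list \<Rightarrow> (real \<times> real) set" where
  "profile \<alpha> = {vertex \<alpha> 0} \<union> (\<Union>i \<in> {1..length \<alpha>}. closed_segment (vertex \<alpha> (i - 1)) (vertex \<alpha> i))"

end

theory Submission
  imports Defs
begin

(* Expanding every push sigma[a] into a copies of sigma and every pop tau[b] into b copies of tau
   does not change the profile, since the path only gets subdivided.  For a reduced sequence the
   expansion is the greedy schedule of the permutation pi it produces: after c pushes and p pops,
   pop iff the next output of pi is among the pushed elements 1..c.  Indeed a block tau[b] outputs
   b elements that are already on the working stack, while by reducedness a run of pushes starting
   with sigma[a] ends with sigma tau, whose output exceeds every element pushed before it.  The greedy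
   schedule of pi is unique, so equivalent reduced sequences have equal expansions and profiles. *)

lemma seq_size_simps [simp]:
  "seq_size [] = 0"
  "seq_size (x # \<alpha>) = push_size x + seq_size \<alpha>"
  "seq_size (\<alpha> @ \<beta>) = seq_size \<alpha> + seq_size \<beta>"
  by (simp_all add: seq_size_def)

fun unit_ops :: "op \<Rightarrow> op list" where
  "unit_ops (Push a) = replicate a (Push 1)"
| "unit_ops (Pop b) = replicate b (Pop 1)"

definition unit_expansion :: "op list \<Rightarrow> op list" where
  "unit_expansion \<alpha> = concat (map unit_ops \<alpha>)"

lemma unit_expansion_Cons [simp]: "unit_expansion (x # \<alpha>) = unit_ops x @ unit_expansion \<alpha>"
  and unit_expansion_Nil [simp]: "unit_expansion [] = []"
  by (simp_all add: unit_expansion_def)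

lemma vertex_Cons_0 [simp]: "vertex (q # \<alpha>) 0 = 0"
  and vertex_Cons_Suc [simp]: "vertex (q # \<alpha>) (Suc i) = op_vec q + vertex \<alpha> i"
  by (simp_all add: vertex_def)

lemma zero_in_profile: "0 \<in> profile \<alpha>"
  by (simp add: profile_def vertex_def)

lemma profile_Nil: "profile [] = {0}"
  by (simp add: profile_def vertex_def)

lemma profile_Cons:
  "profile (q # \<alpha>) = closed_segment 0 (op_vec q) \<union> (\<lambda>x. op_vec q + x) ` profile \<alpha>"
proof -
  let ?seg = "\<lambda>\<gamma> i. closed_segment (vertex \<gamma> (i - 1)) (vertex \<gamma> i)"
  have idx: "{1..length (q # \<alpha>)} = insert 1 (Suc ` {1..length \<alpha>})"
    by (auto simp: image_iff)
  have shift: "?seg (q # \<alpha>) (Suc i) = (\<lambda>x. op_vec q + x) ` ?seg \<alpha> i" if "1 \<le> i" for i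
    using that by (cases i) (simp_all add: closed_segment_translation)
  have "profile (q # \<alpha>) = {0} \<union> closed_segment 0 (op_vec q) \<union> (\<Union>i \<in> {1..length \<alpha>}. ?seg (q # \<alpha>) (Suc i))"
    unfolding profile_def idx UN_insert SUP_image by (simp add: vertex_def)
  also have "\<dots> = {0} \<union> closed_segment 0 (op_vec q) \<union> (\<lambda>x. op_vec q + x) ` (\<Union>i \<in> {1..length \<alpha>}. ?seg \<alpha> i)"
    using shift by (simp add: image_UN)
  finally show ?thesis
    by (auto simp: profile_def vertex_def)
qed

lemma profile_append:
  "profile (\<alpha> @ \<beta>) = profile \<alpha> \<union> (\<lambda>x. sum_list (map op_vec \<alpha>) + x) ` profile \<beta>"
proof (induction \<alpha>)
  case Nil
  then show ?case by (simp add: profile_Nil zero_in_profile insert_absorb)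
next
  case (Cons q \<alpha>)
  then show ?case by (simp add: profile_Cons image_Un image_image add.assoc Un_assoc)
qed

lemma profile_replicate: "profile (replicate a q) = closed_segment 0 (real a *\<^sub>R op_vec q)"
proof (induction a)
  case 0
  then show ?case by (simp add: profile_Nil)
next
  case (Suc a)
  let ?v = "op_vec q"
  have "?v \<in> closed_segment 0 (real (Suc a) *\<^sub>R ?v)"
    by (auto simp: in_segment intro!: exI[of _ "1 / real (Suc a)"])
  then have "closed_segment 0 ?v \<union> closed_segment ?v (?v + real a *\<^sub>R ?v)
      = closed_segment 0 (real (Suc a) *\<^sub>R ?v)"
    by (simp add: Un_closed_segment algebra_simps)
  then show ?case
    using Suc by (simp add: profile_Cons flip: closed_segment_translation)
qed

lemma sum_list_op_vec_replicate: "sum_list (map op_vec (replicate a q)) = real a *\<^sub>R op_vec q"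
  by (induction a) (simp_all add: algebra_simps)

lemma sum_list_op_vec_unit_ops: "sum_list (map op_vec (unit_ops q)) = op_vec q"
  by (cases q) (simp_all add: sum_list_op_vec_replicate del: map_replicate)

lemma profile_unit_ops: "profile (unit_ops q) = profile [q]"
  by (cases q) (simp_all add: profile_replicate profile_Cons profile_Nil insert_absorb)

lemma profile_unit_expansion: "profile (unit_expansion \<alpha>) = profile \<alpha>"
proof (induction \<alpha>)
  case Nil
  then show ?case by simp
next
  case (Cons q \<alpha>)
  have "profile (unit_expansion (q # \<alpha>)) = profile [q] \<union> (\<lambda>x. op_vec q + x) ` profile \<alpha>"
    by (simp add: profile_append sum_list_op_vec_unit_ops profile_unit_ops Cons.IH)
  also have "\<dots> = profile (q # \<alpha>)"
    using profile_append[of "[q]" \<alpha>] by simp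
  finally show ?case .
qed

lemma length_unit_expansion: "length (unit_expansion \<alpha>) = seq_size \<alpha> + sum_list (map pop_size \<alpha>)"
proof (induction \<alpha>)
  case (Cons x \<alpha>)
  then show ?case by (cases x) simp_all
qed simp

fun clears_stack :: "nat \<Rightarrow> op list \<Rightarrow> bool" where
  "clears_stack h [] \<longleftrightarrow> h = 0"
| "clears_stack h (Push a # \<gamma>) \<longleftrightarrow> clears_stack (h + a) \<gamma>"
| "clears_stack h (Pop b # \<gamma>) \<longleftrightarrow> b \<le> h \<and> clears_stack (h - b) \<gamma>"

lemma clears_stack_if_balanced:
  assumes "\<forall>k \<le> length \<gamma>. sum_list (map pop_size (take k \<gamma>)) \<le> h + sum_list (map push_size (take k \<gamma>))"
    and "sum_list (map pop_size \<gamma>) = h + sum_list (map push_size \<gamma>)"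
  shows "clears_stack h \<gamma>"
  using assms
proof (induction \<gamma> arbitrary: h)
  case Nil
  then show ?case by simp
next
  case (Cons x \<gamma>)
  have prefix: "sum_list (map pop_size (take k \<gamma>)) + pop_size x \<le> h + push_size x + sum_list (map push_size (take k \<gamma>))"
    if "k \<le> length \<gamma>" for k
    using Cons.prems(1) that by (fastforce dest: spec[of _ "Suc k"])
  show ?case
  proof (cases x)
    case (Push a)
    then show ?thesis using Cons prefix by simp
  next
    case (Pop b)
    have "b \<le> h" using Cons.prems(1) Pop by (auto dest: spec[of _ 1])
    then show ?thesis using Cons prefix Pop by (simp add: le_diff_conv2)
  qed
qed

lemma well_formed_clears_stack: "well_formed \<alpha> \<Longrightarrow> clears_stack 0 \<alpha>"
  by (rule clears_stack_if_balanced) (simp_all add: well_formed_def)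

lemma clears_stack_has_pop: "clears_stack h \<gamma> \<Longrightarrow> 0 < h \<Longrightarrow> \<exists>x \<in> set \<gamma>. is_pop x"
  by (induction h \<gamma> rule: clears_stack.induct) auto

lemma is_pop_iff: "is_pop x \<longleftrightarrow> \<not> is_push x"
  by (cases x) simp_all

lemma reducedD:
  assumes "reduced (\<alpha> @ x # y # \<beta>)" "is_push x" "is_pop y"
  shows "x = Push 1 \<and> y = Pop 1"
  using assms unfolding reduced_def by (auto dest: spec[of _ "length \<alpha>"] simp: nth_append)

lemma reduced_Cons: "reduced (x # \<alpha>) \<Longrightarrow> reduced \<alpha>"
  unfolding reduced_def by (auto dest: spec[of _ "Suc _"])

lemma reduced_push_block:
  assumes "reduced (Push a # \<gamma>)" "\<exists>x \<in> set \<gamma>. is_pop x"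
  obtains ps \<delta> where "Push a # \<gamma> = ps @ Push 1 # Pop 1 # \<delta>" "list_all is_push ps"
    "a \<le> seq_size ps + 1"
proof -
  define qs where "qs = Push a # takeWhile is_push \<gamma>"
  have "dropWhile is_push \<gamma> \<noteq> []"
    using assms(2) by (auto simp: dropWhile_eq_Nil_conv is_pop_iff)
  then obtain y \<delta> where rest: "dropWhile is_push \<gamma> = y # \<delta>"
    by (meson neq_Nil_conv)
  then have y: "is_pop y"
    using hd_dropWhile[of is_push \<gamma>] by (simp add: is_pop_iff)
  have qs_push: "list_all is_push qs"
    by (auto simp: qs_def list_all_iff dest: set_takeWhileD)
  have qs_snoc: "qs = butlast qs @ [last qs]"
    unfolding qs_def by (rule append_butlast_last_id[symmetric]) simp
  have "Push a # \<gamma> = qs @ y # \<delta>"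
    using takeWhile_dropWhile_id[of is_push \<gamma>] rest by (simp add: qs_def)
  then have split: "Push a # \<gamma> = butlast qs @ last qs # y # \<delta>"
    using qs_snoc by (metis append.assoc append_Cons append_Nil)
  moreover have "is_push (last qs)"
    using qs_push by (simp add: qs_def list_all_iff)
  ultimately have "last qs = Push 1" "y = Pop 1"
    using reducedD assms(1) y by metis+
  moreover have "list_all is_push (butlast qs)"
    using qs_push by (simp add: list_all_iff in_set_butlastD)
  moreover have "a \<le> seq_size (butlast qs) + 1"
  proof -
    have "a \<le> seq_size qs"
      by (simp add: qs_def)
    also have "\<dots> = seq_size (butlast qs) + 1"
      using qs_snoc \<open>last qs = Push 1\<close> by (metis seq_size_simps push_size.simps(1) add.right_neutral)
    finally show ?thesis .
  qed
  ultimately show thesis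
    using split by (intro that[of "butlast qs" \<delta>]) simp_all
qed

lemma output_suffix: "\<exists>Y. snd (snd (foldl step (inp, w, out) \<gamma>)) = Y @ out"
proof (induction \<gamma> arbitrary: inp w out)
  case Nil
  then show ?case by simp
next
  case (Cons x \<gamma>)
  show ?case
  proof (cases x)
    case (Push a)
    then show ?thesis using Cons.IH[of "drop a inp" "take a inp @ w" out] by simp
  next
    case (Pop b)
    then show ?thesis using Cons.IH[of inp "drop b w" "take b w @ out"] by auto
  qed
qed

lemma foldl_step_pushes:
  "list_all is_push ps \<Longrightarrow> \<exists>W. foldl step (inp, w, out) ps = (drop (seq_size ps) inp, W, out)"
proof (induction ps arbitrary: inp w)
  case Nil
  then show ?case by simp
next
  case (Cons x ps)
  then obtain a where "x = Push a" by (cases x) auto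
  then show ?case
    using Cons.IH[of "drop a inp" "take a inp @ w"] Cons.prems by (simp add: add.commute)
qed

lemma output_after_push_block:
  assumes "list_all is_push ps" "seq_size ps < length inp"
  shows "\<exists>Y. snd (snd (foldl step (inp, w, out) (ps @ Push 1 # Pop 1 # \<delta>)))
    = Y @ inp ! seq_size ps # out"
proof -
  obtain W where W: "foldl step (inp, w, out) ps = (drop (seq_size ps) inp, W, out)"
    using foldl_step_pushes[OF assms(1)] by blast
  have "drop (seq_size ps) inp = inp ! seq_size ps # drop (Suc (seq_size ps)) inp"
    using assms(2) by (rule Cons_nth_drop_Suc[symmetric])
  then have "foldl step (inp, w, out) (ps @ Push 1 # Pop 1 # \<delta>)
      = foldl step (drop (Suc (seq_size ps)) inp, W, inp ! seq_size ps # out) \<delta>"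
    by (simp add: W)
  then show ?thesis
    using output_suffix by metis
qed

(* rev pi lists the elements in the order in which they were output. *)
definition outputs_below :: "nat list \<Rightarrow> nat \<Rightarrow> nat" where
  "outputs_below \<pi> k = length (takeWhile (\<lambda>y. y < k) (rev \<pi>))"

lemma outputs_below_mono: "k \<le> k' \<Longrightarrow> outputs_below \<pi> k \<le> outputs_below \<pi> k'"
proof -
  have "k \<le> k' \<Longrightarrow> length (takeWhile (\<lambda>y. y < k) xs) \<le> length (takeWhile (\<lambda>y. y < k') xs)" for xs
    by (induction xs) auto
  then show "k \<le> k' \<Longrightarrow> ?thesis" unfolding outputs_below_def .
qed

lemma outputs_below_ge: "\<forall>y \<in> set zs. y < k \<Longrightarrow> length zs \<le> outputs_below (Y @ zs) k"
  unfolding outputs_below_def by (subst rev_append, subst takeWhile_append2) auto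

lemma outputs_below_le: "k \<le> x \<Longrightarrow> outputs_below (Y @ x # out) k \<le> length out"
proof -
  have "k \<le> x \<Longrightarrow> length (takeWhile (\<lambda>y. y < k) (xs @ x # ys)) \<le> length xs" for xs ys
    by (induction xs) auto
  then show "k \<le> x \<Longrightarrow> ?thesis" unfolding outputs_below_def by (simp, metis length_rev)
qed

(* With 1..c pushed and p elements output, the next output is already on the working stack iff
   the first p + 1 outputs are all at most c. *)
fun greedy_schedule :: "nat list \<Rightarrow> nat \<Rightarrow> nat \<Rightarrow> op list \<Rightarrow> bool" where
  "greedy_schedule \<pi> c p [] \<longleftrightarrow> True"
| "greedy_schedule \<pi> c p (Push a # \<gamma>) \<longleftrightarrow>
     a = 1 \<and> outputs_below \<pi> (Suc c) \<le> p \<and> greedy_schedule \<pi> (Suc c) p \<gamma>"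
| "greedy_schedule \<pi> c p (Pop b # \<gamma>) \<longleftrightarrow>
     b = 1 \<and> p < outputs_below \<pi> (Suc c) \<and> greedy_schedule \<pi> c (Suc p) \<gamma>"

lemma greedy_schedule_unique:
  "greedy_schedule \<pi> c p \<gamma> \<Longrightarrow> greedy_schedule \<pi> c p \<delta> \<Longrightarrow> length \<gamma> = length \<delta> \<Longrightarrow> \<gamma> = \<delta>"
proof (induction \<pi> c p \<gamma> arbitrary: \<delta> rule: greedy_schedule.induct)
  case (2 \<pi> c p a \<gamma>)
  then show ?case by (cases \<delta>; cases "hd \<delta>") auto
next
  case (3 \<pi> c p b \<gamma>)
  then show ?case by (cases \<delta>; cases "hd \<delta>") auto
qed simp

lemma greedy_schedule_pushes:
  assumes "0 < a \<Longrightarrow> outputs_below \<pi> (c + a) \<le> p" "greedy_schedule \<pi> (c + a) p \<gamma>"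
  shows "greedy_schedule \<pi> c p (replicate a (Push 1) @ \<gamma>)"
  using assms
proof (induction a arbitrary: c)
  case 0
  then show ?case by simp
next
  case (Suc a)
  have "outputs_below \<pi> (Suc c) \<le> outputs_below \<pi> (c + Suc a)"
    by (rule outputs_below_mono) simp
  then show ?case using Suc.prems Suc.IH[of "Suc c"] by simp
qed

lemma greedy_schedule_pops:
  assumes "p + b \<le> outputs_below \<pi> (Suc c)" "greedy_schedule \<pi> c (p + b) \<gamma>"
  shows "greedy_schedule \<pi> c p (replicate b (Pop 1) @ \<gamma>)"
  using assms by (induction b arbitrary: p) auto

lemma outputs_below_after_push:
  notes upt_Suc [simp del]
  assumes "reduced (Push a # \<gamma>)" "clears_stack h (Push a # \<gamma>)" "0 < a"
  shows "outputs_below (snd (snd (foldl step ([Suc c..<Suc c + seq_size (Push a # \<gamma>)], w, out) (Push a # \<gamma>))))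
    (c + a) \<le> length out"
proof -
  let ?inp = "[Suc c..<Suc c + seq_size (Push a # \<gamma>)]"
  have "\<exists>x \<in> set \<gamma>. is_pop x"
    using assms(2,3) clears_stack_has_pop by simp
  then obtain ps \<delta> where split: "Push a # \<gamma> = ps @ Push 1 # Pop 1 # \<delta>"
    and ps: "list_all is_push ps" "a \<le> seq_size ps + 1"
    using reduced_push_block assms(1) by blast
  have "seq_size (Push a # \<gamma>) = seq_size ps + 1 + seq_size \<delta>"
    unfolding split by simp
  then have "seq_size ps < length ?inp"
    by simp
  then obtain Y where "snd (snd (foldl step (?inp, w, out) (Push a # \<gamma>))) = Y @ ?inp ! seq_size ps # out"
    using output_after_push_block[OF ps(1)] unfolding split by blast
  moreover have "c + a \<le> ?inp ! seq_size ps"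
    using \<open>seq_size ps < length ?inp\<close> ps(2) by simp
  ultimately show ?thesis
    using outputs_below_le by simp
qed

lemma greedy_schedule_run:
  notes upt_Suc [simp del]
  assumes "\<forall>x \<in> set w \<union> set out. x \<le> c" "clears_stack (length w) \<gamma>" "reduced \<gamma>"
  shows "greedy_schedule (snd (snd (foldl step ([Suc c..<Suc c + seq_size \<gamma>], w, out) \<gamma>)))
    c (length out) (unit_expansion \<gamma>)"
  using assms
proof (induction \<gamma> arbitrary: c w out)
  case Nil
  then show ?case by simp
next
  case (Cons x \<gamma>)
  let ?\<pi> = "snd (snd (foldl step ([Suc c..<Suc c + seq_size (x # \<gamma>)], w, out) (x # \<gamma>)))"
  have red: "reduced \<gamma>"
    using Cons.prems(3) by (rule reduced_Cons)
  show ?case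
  proof (cases x)
    case (Push a)
    let ?inp = "[Suc c..<Suc c + (a + seq_size \<gamma>)]"
    have take: "take a ?inp = [Suc c..<Suc c + a]"
      by simp
    have "drop a ?inp = [Suc (c + a)..<Suc (c + a) + seq_size \<gamma>]"
      by (simp add: add.assoc)
    moreover have "greedy_schedule (snd (snd (foldl step
        ([Suc (c + a)..<Suc (c + a) + seq_size \<gamma>], take a ?inp @ w, out) \<gamma>))) (c + a) (length out)
        (unit_expansion \<gamma>)"
    proof (rule Cons.IH)
      show "\<forall>y \<in> set (take a ?inp @ w) \<union> set out. y \<le> c + a"
        using Cons.prems(1) take by force
      show "clears_stack (length (take a ?inp @ w)) \<gamma>"
        using Cons.prems(2) Push by (simp add: add.commute)
    qed (rule red)
    ultimately have "greedy_schedule ?\<pi> (c + a) (length out) (unit_expansion \<gamma>)"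
      using Push by simp
    moreover have "outputs_below ?\<pi> (c + a) \<le> length out" if "0 < a"
      using outputs_below_after_push[of a \<gamma> "length w"] Cons.prems(2,3) Push that by simp
    ultimately show ?thesis
      using Push greedy_schedule_pushes[of a ?\<pi> c "length out" "unit_expansion \<gamma>"] by simp
  next
    case (Pop b)
    have b: "b \<le> length w"
      using Cons.prems(2) Pop by simp
    have below: "\<forall>y \<in> set (drop b w) \<union> set (take b w @ out). y \<le> c"
      using Cons.prems(1) by (auto dest: in_set_takeD in_set_dropD)
    have IH: "greedy_schedule ?\<pi> c (length out + b) (unit_expansion \<gamma>)"
      using Cons.IH[OF below] Cons.prems(2) red Pop b by (simp add: add.commute)
    obtain Y where "?\<pi> = Y @ take b w @ out"
      using output_suffix Pop by fastforce
    then have "length out + b \<le> outputs_below ?\<pi> (Suc c)"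
      using outputs_below_ge[of "take b w @ out" "Suc c" Y] below b by (simp add: less_Suc_eq_le)
    then show ?thesis
      using IH Pop greedy_schedule_pops[of "length out" b ?\<pi> c "unit_expansion \<gamma>"] by simp
  qed
qed

lemma greedy_schedule_produced:
  "well_formed \<alpha> \<Longrightarrow> reduced \<alpha> \<Longrightarrow> greedy_schedule (produced \<alpha>) 0 0 (unit_expansion \<alpha>)"
  using greedy_schedule_run[of "[]" "[]" 0 \<alpha>] well_formed_clears_stack by (simp add: produced_def)

theorem mainTheorem9:
  fixes \<alpha> \<beta> :: "op list"
  assumes "well_formed \<alpha>" and "well_formed \<beta>"
    and "reduced \<alpha>" and "reduced \<beta>"
    and "equivalent \<alpha> \<beta>"
  shows "profile \<alpha> = profile \<beta>"
proof -
  have same: "produced \<alpha> = produced \<beta>" "seq_size \<alpha> = seq_size \<beta>"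
    using assms(5) by (simp_all add: equivalent_def)
  have "greedy_schedule (produced \<alpha>) 0 0 (unit_expansion \<alpha>)"
    using assms(1,3) by (rule greedy_schedule_produced)
  moreover have "greedy_schedule (produced \<alpha>) 0 0 (unit_expansion \<beta>)"
    using greedy_schedule_produced[OF assms(2,4)] same(1) by simp
  moreover have "length (unit_expansion \<alpha>) = length (unit_expansion \<beta>)"
    using assms(1,2) same(2) by (simp add: length_unit_expansion well_formed_def seq_size_def)
  ultimately have "unit_expansion \<alpha> = unit_expansion \<beta>"
    by (rule greedy_schedule_unique)
  then show ?thesis
    by (metis profile_unit_expansion)
qed

end
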